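(* For every probability distribution on inputs of length $n$, every $p\in[0,1]$ and every $k\ge1$, there is a deterministic algorithm for Locate (which may depend on the distribution) that runs in $k$ rounds, asks at most $k\lceil pn\rceil^{1/k}$ queries, and succeeds with probability at least $p$ when the input is drawn from that distribution.
   Context: Locate problem in the rank query model: there is a vector $\vec{x}=(x_1,\ldots,x_n)$ whose ranks form a permutation of $\{1,\ldots,n\}$; an index $i$ is given and the goal is to output $\mathrm{rank}(x_i)$. Queries have the form "How is $\mathrm{rank}(x_j)$ compared to $m$?", with answer "$<$", "$=$" or "$>$". An algorithm runs in $k$ rounds if in each of $k$ rounds it submits a set of queries chosen depending only on answers of earlier rounds, then receives all answers. An input distribution is a distribution over rank permutations. *)

theory Defs
  imports "HOL-Probability.Probability"
begin

text \<open>Rank query model. An input of length n is given by its rank permutation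
  sigma, where sigma j = rank(x_j) for j in {1..n}; sigma permutes {1..n}.
  A query (j, m) asks how rank(x_j) compares to m.\<close>

datatype answer = Lt | Eq | Gt

definition cmp :: "nat \<Rightarrow> nat \<Rightarrow> answer" where
  "cmp a m = (if a < m then Lt else if a = m then Eq else Gt)"

text \<open>Answers of one round to the query set Q (unasked queries get a fixed dummy value).\<close>
definition round_answers :: "(nat \<Rightarrow> nat) \<Rightarrow> (nat \<times> nat) set \<Rightarrow> (nat \<times> nat \<Rightarrow> answer)" where
  "round_answers \<sigma> Q = (\<lambda>q. if q \<in> Q then cmp (\<sigma> (fst q)) (snd q) else Eq)"

text \<open>A deterministic round-based algorithm: the query set of a round is a function of
  the answers of all earlier rounds (the history); the output is a function of the
  full history.\<close>
record algorithm =
  queries :: "(nat \<times> nat \<Rightarrow> answer) list \<Rightarrow> (nat \<times> nat) set"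
  answer_of :: "(nat \<times> nat \<Rightarrow> answer) list \<Rightarrow> nat"

fun history :: "algorithm \<Rightarrow> (nat \<Rightarrow> nat) \<Rightarrow> nat \<Rightarrow> (nat \<times> nat \<Rightarrow> answer) list" where
  "history A \<sigma> 0 = []"
| "history A \<sigma> (Suc r) =
     (let h = history A \<sigma> r in h @ [round_answers \<sigma> (queries A h)])"

definition round_queries :: "algorithm \<Rightarrow> (nat \<Rightarrow> nat) \<Rightarrow> nat \<Rightarrow> (nat \<times> nat) set" where
  "round_queries A \<sigma> r = queries A (history A \<sigma> r)"

definition num_queries :: "algorithm \<Rightarrow> nat \<Rightarrow> (nat \<Rightarrow> nat) \<Rightarrow> nat" where
  "num_queries A k \<sigma> = (\<Sum>r<k. card (round_queries A \<sigma> r))"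

definition run_output :: "algorithm \<Rightarrow> nat \<Rightarrow> (nat \<Rightarrow> nat) \<Rightarrow> nat" where
  "run_output A k \<sigma> = answer_of A (history A \<sigma> k)"

end

theory Submission
  imports Defs "HOL-Library.More_List"
begin

text \<open>Let \<open>m = \<lceil>p n\<rceil>\<close> and let \<open>S\<close> be a set of \<open>m\<close> ranks which together are the most
  likely values of \<open>rank(x_i)\<close>; by averaging, \<open>rank(x_i) \<in> S\<close> with probability at least
  \<open>m / n \<ge> p\<close>. Let \<open>s_0 < \<dots> < s_{m-1}\<close> be the elements of \<open>S\<close>, padded by a value above \<open>S\<close>
  for indices \<open>j \<ge> m\<close>, and let \<open>t\<close> be the position of \<open>rank(x_i) \<in> S\<close> in this list. With
  \<open>b = \<lfloor>m^{1/k}\<rfloor>\<close> we have \<open>m < (b + 1)^k\<close>, so \<open>t\<close> has \<open>k\<close> digits in base \<open>b + 1\<close>. Knowing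
  the leading \<open>r\<close> digits, i.e. \<open>B = t\<close> rounded down to a multiple of \<open>(b + 1) w\<close> with
  \<open>w = (b + 1)^{k-r-1}\<close>, the \<open>b\<close> queries comparing \<open>rank(x_i)\<close> with \<open>s_{B + c w}\<close>, \<open>c = 1..b\<close>,
  reveal the next digit: it is the number of answers other than \<open><\<close>. After \<open>k\<close> rounds of \<open>b\<close>
  queries the algorithm knows \<open>t\<close> and outputs \<open>s_t\<close>.\<close>

lemma heavy_subset_exists:
  fixes f :: "'a \<Rightarrow> real"
  assumes "finite U" "m \<le> card U" "\<And>x. x \<in> U \<Longrightarrow> 0 \<le> f x"
  shows "\<exists>S\<subseteq>U. card S = m \<and> real m * sum f U \<le> real (card U) * sum f S"
  using assms
proof (induction "card U" arbitrary: U)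
  case 0
  then show ?case by auto
next
  case (Suc N)
  show ?case
  proof (cases "m = card U")
    case True
    then show ?thesis by auto
  next
    case False
    with Suc.prems Suc.hyps(2) have "m \<le> N" by simp
    define u where "u = arg_min_on f U"
    have "U \<noteq> {}" using Suc.hyps(2) by auto
    have u: "u \<in> U" "\<And>x. x \<in> U \<Longrightarrow> f u \<le> f x"
      using Suc.prems(1) \<open>U \<noteq> {}\<close> unfolding u_def
      by (simp_all add: arg_min_if_finite(1) arg_min_least)
    let ?U = "U - {u}"
    have "card ?U = N" using Suc.hyps(2) u(1) by simp
    with Suc.hyps(1) Suc.prems \<open>m \<le> N\<close> obtain S
      where S: "S \<subseteq> ?U" "card S = m" "real m * sum f ?U \<le> real N * sum f S"
      by auto
    \<comment> \<open>removing a lightest element keeps at least the fraction \<open>N / (N + 1)\<close> of the mass\<close>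
    have "sum (\<lambda>_. f u) U \<le> sum f U" using u(2) by (intro sum_mono)
    then have "real (Suc N) * f u \<le> sum f U" by (simp flip: Suc.hyps(2))
    moreover have "sum f U = f u + sum f ?U" using Suc.prems(1) u(1) by (simp add: sum.remove)
    ultimately have "real N * sum f U \<le> real (Suc N) * sum f ?U" by (simp add: algebra_simps)
    then have "real m * (real N * sum f U) \<le> real m * (real (Suc N) * sum f ?U)"
      by (rule mult_left_mono) simp
    also have "\<dots> = real (Suc N) * (real m * sum f ?U)" by (simp add: algebra_simps)
    also have "\<dots> \<le> real (Suc N) * (real N * sum f S)"
      using S(3) by (intro mult_left_mono) auto
    finally have "real N * (real m * sum f U) \<le> real N * (real (Suc N) * sum f S)"
      by (simp add: algebra_simps)
    moreover have "0 \<le> sum f S" using S(1) Suc.prems(3) by (intro sum_nonneg) auto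
    ultimately have "real m * sum f U \<le> real (Suc N) * sum f S"
      using \<open>m \<le> N\<close> by (cases "N = 0") (auto simp: mult_le_cancel_left_pos)
    then show ?thesis using S(1,2) Suc.hyps(2) by auto
  qed
qed

lemma heavy_rank_set_exists:
  fixes D :: "(nat \<Rightarrow> nat) pmf"
  assumes "set_pmf D \<subseteq> {\<sigma>. \<sigma> permutes {1..n}}" "i \<in> {1..n}" "m \<le> n"
  shows "\<exists>S\<subseteq>{1..n}. card S = m \<and> real m \<le> real n * measure_pmf.prob D {\<sigma>. \<sigma> i \<in> S}"
proof -
  let ?M = "map_pmf (\<lambda>\<sigma>. \<sigma> i) D"
  have "\<sigma> i \<in> {1..n}" if "\<sigma> \<in> set_pmf D" for \<sigma>
    using assms(1,2) that by (metis mem_Collect_eq permutes_in_image subsetD)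
  then have "set_pmf ?M \<subseteq> {1..n}" by auto
  then have "sum (pmf ?M) {1..n} = 1" by (intro sum_pmf_eq_1) auto
  moreover obtain S where S: "S \<subseteq> {1..n}" "card S = m"
    "real m * sum (pmf ?M) {1..n} \<le> real n * sum (pmf ?M) S"
    using heavy_subset_exists[of "{1..n}" m "pmf ?M"] assms(3) by auto
  moreover have "sum (pmf ?M) S = measure_pmf.prob ?M S"
    using finite_subset[OF S(1) finite_atLeastAtMost] by (rule measure_measure_pmf_finite[symmetric])
  moreover have "measure_pmf.prob ?M S = measure_pmf.prob D {\<sigma>. \<sigma> i \<in> S}"
    by (simp add: vimage_def)
  ultimately show ?thesis by auto
qed

lemma less_power_nat_floor_root:
  fixes m k :: nat
  assumes "k \<ge> 1"
  shows "m < (nat \<lfloor>real m powr (1 / real k)\<rfloor> + 1) ^ k"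
proof -
  let ?x = "real m powr (1 / real k)"
  have "0 \<le> ?x" by simp
  have "?x < real_of_int \<lfloor>?x\<rfloor> + 1" by simp
  also have "\<dots> = real (nat \<lfloor>?x\<rfloor> + 1)" using \<open>0 \<le> ?x\<close> by (simp add: of_nat_nat)
  finally have "?x ^ k < real (nat \<lfloor>?x\<rfloor> + 1) ^ k"
    using \<open>0 \<le> ?x\<close> assms by (intro power_strict_mono) auto
  moreover have "?x ^ k = real m"
    using assms by (cases "m = 0") (simp_all add: powr_power)
  ultimately have "real m < real ((nat \<lfloor>?x\<rfloor> + 1) ^ k)" by simp
  then show ?thesis by linarith
qed

lemma nth_less_nth_default_iff:
  fixes xs :: "'a::linorder list"
  assumes "sorted_wrt (<) xs" "t < length xs" "xs ! t < d"
  shows "xs ! t < nth_default d xs j \<longleftrightarrow> t < j"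
proof (cases "j < length xs")
  case True
  have "xs ! t < xs ! j \<longleftrightarrow> t < j"
  proof
    assume "xs ! t < xs ! j"
    moreover have "\<not> xs ! t < xs ! j" if "j \<le> t"
      using that sorted_wrt_nth_less[OF assms(1), of j t] assms(2) by (cases "j = t") auto
    ultimately show "t < j" by (meson not_le)
  next
    assume "t < j"
    then show "xs ! t < xs ! j" using sorted_wrt_nth_less[OF assms(1)] True by blast
  qed
  then show ?thesis using True by (simp add: nth_default_nth)
next
  case False
  then show ?thesis using assms(2,3) by (simp add: nth_default_def)
qed

text \<open>\<open>search_offset i b k thr r h\<close> is the position of \<open>rank(x_i)\<close> among the thresholds
  \<open>thr\<close>, rounded down to a multiple of \<open>(b + 1)^{k-r}\<close>, as read off from the answers \<open>h\<close>
  of the first \<open>r\<close> rounds.\<close>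

fun search_offset ::
  "nat \<Rightarrow> nat \<Rightarrow> nat \<Rightarrow> (nat \<Rightarrow> nat) \<Rightarrow> nat \<Rightarrow> (nat \<times> nat \<Rightarrow> answer) list \<Rightarrow> nat" where
  "search_offset i b k thr 0 h = 0"
| "search_offset i b k thr (Suc r) h =
     (let B = search_offset i b k thr r h; w = (b + 1) ^ (k - Suc r)
      in B + card {c \<in> {1..b}. (h ! r) (i, thr (B + c * w)) \<noteq> Lt} * w)"

definition digit_search :: "nat \<Rightarrow> nat \<Rightarrow> nat \<Rightarrow> (nat \<Rightarrow> nat) \<Rightarrow> nat list \<Rightarrow> algorithm" where
  "digit_search i b k thr xs =
     \<lparr>queries = (\<lambda>h. let B = search_offset i b k thr (length h) h; w = (b + 1) ^ (k - Suc (length h))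
                     in (\<lambda>c. (i, thr (B + c * w))) ` {1..b}),
      answer_of = (\<lambda>h. xs ! search_offset i b k thr (length h) h)\<rparr>"

lemma search_offset_append:
  "r \<le> length h \<Longrightarrow> search_offset i b k thr r (h @ h') = search_offset i b k thr r h"
  by (induction r) (auto simp: Let_def nth_append)

lemma length_history [simp]: "length (history A \<sigma> r) = r"
  by (induction r) (auto simp: Let_def)

lemma finite_queries_digit_search: "finite (queries (digit_search i b k thr xs) h)"
  by (simp add: digit_search_def Let_def)

lemma card_queries_digit_search: "card (queries (digit_search i b k thr xs) h) \<le> b"
  using card_image_le[of "{1..b}"] by (simp add: digit_search_def Let_def)

lemma num_queries_digit_search: "num_queries (digit_search i b k thr xs) k \<sigma> \<le> k * b"
proof -
  have "num_queries (digit_search i b k thr xs) k \<sigma> \<le> of_nat (card {..<k}) * b"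
    unfolding num_queries_def round_queries_def
    by (intro sum_bounded_above card_queries_digit_search)
  then show ?thesis by simp
qed

lemma round_down_refine:
  fixes t b w :: nat
  assumes "0 < w"
  defines "B \<equiv> t div ((b + 1) * w) * ((b + 1) * w)"
  shows "B + card {c \<in> {1..b}. B + c * w \<le> t} * w = t div w * w"
proof -
  define q where "q = t div w div (b + 1)"
  define d where "d = t div w mod (b + 1)"
  have "t div ((b + 1) * w) = q"
    unfolding q_def using div_mult2_eq[of t w "b + 1"] by (simp add: mult.commute)
  moreover have "t div w = q * (b + 1) + d"
    unfolding q_def d_def by (rule div_mult_mod_eq[symmetric])
  ultimately have tw: "t div w * w = B + d * w"
    unfolding B_def by (simp add: algebra_simps)
  have t: "t = B + d * w + t mod w"
    using tw div_mult_mod_eq[of t w] by linarith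
  have below_t: "B + c * w \<le> t \<longleftrightarrow> c \<le> d" for c
  proof
    assume "B + c * w \<le> t"
    moreover have "t mod w < w" using assms(1) by simp
    ultimately have "c * w < d * w + w" using t by linarith
    then have "c * w < (d + 1) * w" by simp
    then show "c \<le> d" by (simp only: mult_less_cancel2) simp
  next
    assume "c \<le> d"
    then show "B + c * w \<le> t" using t mult_le_mono1[OF \<open>c \<le> d\<close>, of w] by linarith
  qed
  have "d \<le> b" unfolding d_def by simp
  then have "{c \<in> {1..b}. B + c * w \<le> t} = {1..d}" unfolding below_t by auto
  then show ?thesis using tw by simp
qed

lemma search_offset_history:
  assumes below_thr: "\<And>j. \<sigma> i < thr j \<longleftrightarrow> t < j"
    and "t < (b + 1) ^ k" and "r \<le> k"
  shows "search_offset i b k thr r (history (digit_search i b k thr xs) \<sigma> r)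
           = t div (b + 1) ^ (k - r) * (b + 1) ^ (k - r)"
  using \<open>r \<le> k\<close>
proof (induction r)
  case 0
  then show ?case using \<open>t < (b + 1) ^ k\<close> by simp
next
  case (Suc r)
  let ?A = "digit_search i b k thr xs"
  define h where "h = history ?A \<sigma> r"
  define B where "B = search_offset i b k thr r h"
  define w where "w = (b + 1) ^ (k - Suc r)"
  have len: "length h = r" by (simp add: h_def)
  have "k - r = Suc (k - Suc r)" using Suc.prems by simp
  then have "(b + 1) ^ (k - r) = (b + 1) * w" by (simp add: w_def)
  then have B: "B = t div ((b + 1) * w) * ((b + 1) * w)"
    using Suc by (simp add: B_def h_def)
  have "round_answers \<sigma> (queries ?A h) (i, thr (B + c * w)) \<noteq> Lt \<longleftrightarrow> B + c * w \<le> t"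
    if "c \<in> {1..b}" for c
  proof -
    have "(i, thr (B + c * w)) \<in> queries ?A h"
      using that by (auto simp: digit_search_def Let_def len B_def w_def)
    then show ?thesis using below_thr[of "B + c * w"] by (simp add: round_answers_def cmp_def not_less)
  qed
  then have answers: "{c \<in> {1..b}. round_answers \<sigma> (queries ?A h) (i, thr (B + c * w)) \<noteq> Lt}
      = {c \<in> {1..b}. B + c * w \<le> t}"
    by blast
  have "history ?A \<sigma> (Suc r) = h @ [round_answers \<sigma> (queries ?A h)]"
    by (simp add: h_def Let_def)
  then have "search_offset i b k thr (Suc r) (history ?A \<sigma> (Suc r))
      = B + card {c \<in> {1..b}. round_answers \<sigma> (queries ?A h) (i, thr (B + c * w)) \<noteq> Lt} * w"
    by (simp add: Let_def len B_def w_def search_offset_append nth_append)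
  also have "\<dots> = B + card {c \<in> {1..b}. B + c * w \<le> t} * w"
    by (simp only: answers)
  also have "\<dots> = t div w * w"
    unfolding B by (rule round_down_refine) (simp add: w_def)
  finally show ?case by (simp add: w_def)
qed

lemma run_output_digit_search:
  assumes "sorted_wrt (<) xs" "\<sigma> i \<in> set xs" "\<sigma> i < d" "length xs \<le> (b + 1) ^ k"
  shows "run_output (digit_search i b k (nth_default d xs) xs) k \<sigma> = \<sigma> i"
proof -
  obtain t where t: "t < length xs" "xs ! t = \<sigma> i"
    using assms(2) by (metis in_set_conv_nth)
  have "\<sigma> i < nth_default d xs j \<longleftrightarrow> t < j" for j
    using nth_less_nth_default_iff[OF assms(1) t(1)] t(2) assms(3) by simp
  then have "search_offset i b k (nth_default d xs) k
      (history (digit_search i b k (nth_default d xs) xs) \<sigma> k) = t"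
    using search_offset_history[where thr = "nth_default d xs" and r = k and xs = xs] t(1) assms(4)
    by simp
  then show ?thesis using t by (simp add: run_output_def digit_search_def)
qed

definition locate_search :: "nat \<Rightarrow> nat \<Rightarrow> nat set \<Rightarrow> algorithm" where
  "locate_search i k S =
     (let b = nat \<lfloor>real (card S) powr (1 / real k)\<rfloor>; xs = sorted_list_of_set S
      in digit_search i b k (nth_default (Suc (Max S)) xs) xs)"

lemma finite_round_queries_locate_search: "finite (round_queries (locate_search i k S) \<sigma> r)"
  by (simp add: round_queries_def locate_search_def Let_def finite_queries_digit_search)

lemma num_queries_locate_search:
  "real (num_queries (locate_search i k S) k \<sigma>) \<le> real k * real (card S) powr (1 / real k)"
proof -
  let ?b = "nat \<lfloor>real (card S) powr (1 / real k)\<rfloor>"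
  have "real (num_queries (locate_search i k S) k \<sigma>) \<le> real k * real ?b"
    using num_queries_digit_search[of i ?b k] unfolding locate_search_def Let_def
    by (metis of_nat_le_iff of_nat_mult)
  also have "\<dots> \<le> real k * real (card S) powr (1 / real k)"
    by (intro mult_left_mono of_nat_floor) auto
  finally show ?thesis .
qed

lemma run_output_locate_search:
  assumes "finite S" "k \<ge> 1" "\<sigma> i \<in> S"
  shows "run_output (locate_search i k S) k \<sigma> = \<sigma> i"
proof -
  have "\<sigma> i < Suc (Max S)" using Max_ge[OF assms(1,3)] by simp
  moreover have "length (sorted_list_of_set S) \<le> (nat \<lfloor>real (card S) powr (1 / real k)\<rfloor> + 1) ^ k"
    using less_power_nat_floor_root[OF assms(2), of "card S"] by simp
  ultimately show ?thesis
    using assms unfolding locate_search_def Let_def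
    by (intro run_output_digit_search) (simp_all add: sorted_list_of_set.strict_sorted_key_list_of_set)
qed

theorem proposition6:
  fixes n i k :: nat and p :: real and D :: "(nat \<Rightarrow> nat) pmf"
  assumes "set_pmf D \<subseteq> {\<sigma>. \<sigma> permutes {1..n}}"
    and "i \<in> {1..n}"
    and "0 \<le> p" "p \<le> 1"
    and "k \<ge> 1"
  shows "\<exists>A :: algorithm.
           (\<forall>\<sigma>. \<sigma> permutes {1..n} \<longrightarrow>
               (\<forall>r<k. finite (round_queries A \<sigma> r))
             \<and> real (num_queries A k \<sigma>) \<le> real k * (real (nat \<lceil>p * real n\<rceil>)) powr (1 / real k))
         \<and> measure_pmf.prob D {\<sigma>. run_output A k \<sigma> = \<sigma> i} \<ge> p"
proof -
  define m where "m = nat \<lceil>p * real n\<rceil>"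
  have "p * real n \<le> real m" "m \<le> n"
    using assms(3,4) by (auto simp: m_def real_nat_ceiling_ge mult_left_le_one_le nat_le_iff ceiling_le_iff)
  then obtain S where S: "S \<subseteq> {1..n}" "card S = m"
    "real m \<le> real n * measure_pmf.prob D {\<sigma>. \<sigma> i \<in> S}"
    using heavy_rank_set_exists[OF assms(1,2)] by blast
  have "finite S" using S(1) finite_subset by blast
  have "real n * p \<le> real n * measure_pmf.prob D {\<sigma>. \<sigma> i \<in> S}"
    using S(3) \<open>p * real n \<le> real m\<close> by (metis mult.commute order.trans)
  then have "p \<le> measure_pmf.prob D {\<sigma>. \<sigma> i \<in> S}"
    by (rule mult_left_le_imp_le) (use assms(2) in auto)
  also have "\<dots> \<le> measure_pmf.prob D {\<sigma>. run_output (locate_search i k S) k \<sigma> = \<sigma> i}"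
    using run_output_locate_search[OF \<open>finite S\<close> assms(5)]
    by (intro measure_pmf.finite_measure_mono) auto
  finally show ?thesis
    using finite_round_queries_locate_search num_queries_locate_search[of i k S] S(2)
    unfolding m_def by (intro exI[of _ "locate_search i k S"]) auto
qed

end
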